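(* In the supersample setting described in the context, assume the loss takes values in $\{0,1\}$ and let $\gamma\in(0,1)$. For any $C_1>0$, \[ \mathrm{Err}-C_1V(\gamma)\leq\frac{2+C_1\gamma^2}{n}\sum_{i=1}^n\mathbb E_{L^+_{i},\tilde{\varepsilon}_i}\left[\tilde{\varepsilon}_iL^+_{i}\right], \] where $\tilde{\varepsilon}_i=(-1)^{1-U_i}-\frac{C_1\gamma^2}{C_1\gamma^2+2}$ (a shifted Rademacher variable with mean $-\frac{C_1\gamma^2}{C_1\gamma^2+2}$).
   Context: Let $\mathcal Z=\mathcal X\times\mathcal Y$ and let $\mu$ be a distribution on $\mathcal Z$. A (possibly randomized) learning algorithm $\mathcal A$ maps a training sample in $\mathcal Z^n$ to a hypothesis $W\in\mathcal W$, and $\ell:\mathcal W\times\mathcal Z\to\{0,1\}$ is a loss. For $S=(Z_1,\dots,Z_n)\sim\mu^{n}$ and $W\sim P_{W|S}$, let $L_\mu=\mathbb E_W\mathbb E_{Z'\sim\mu}[\ell(W,Z')]$ (with $Z'$ independent of $(S,W)$), $L_S(w)=\frac1n\sum_i\ell(w,Z_i)$, $L_n=\mathbb E_{W,S}[L_S(W)]$ and $\mathrm{Err}=L_\mu-L_n$. The $\gamma$-variance is $V(\gamma)=\mathbb E_{W,S}\big[\frac1n\sum_{i=1}^n(\ell(W,Z_i)-(1+\gamma)L_S(W))^2\big]$. Supersample: $\widetilde Z=(\widetilde Z_{i,j})_{i\in\{1,\dots,n\},j\in\{0,1\}}$ with i.i.d. entries of law $\mu$; $U=(U_1,\dots,U_n)$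 uniform on $\{0,1\}^n$, independent of $\widetilde Z$; $W=\mathcal A(\widetilde Z_U)$ with $\widetilde Z_U=(\widetilde Z_{1,U_1},\dots,\widetilde Z_{n,U_n})$; $L_i^+=\ell(W,\widetilde Z_{i,0})$. *)

theory Defs
  imports "HOL-Probability.Probability"
begin

(* Training samples S = (Z_1,...,Z_n) are represented as extensional functions
   on {..<n} (index i ranges over 0..n-1 instead of 1..n). *)

definition sample_space :: "'z measure \<Rightarrow> nat \<Rightarrow> (nat \<Rightarrow> 'z) measure" where
  "sample_space \<mu> n = PiM {..<n} (\<lambda>_. \<mu>)"

definition joint_SW :: "'z measure \<Rightarrow> 'w measure \<Rightarrow> nat \<Rightarrow> ((nat \<Rightarrow> 'z) \<Rightarrow> 'w measure)
    \<Rightarrow> ((nat \<Rightarrow> 'z) \<times> 'w) measure" where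
  "joint_SW \<mu> Wm n K = sample_space \<mu> n \<bind>
      (\<lambda>s. distr (K s) (sample_space \<mu> n \<Otimes>\<^sub>M Wm) (\<lambda>w. (s, w)))"

definition emp_risk :: "('w \<Rightarrow> 'z \<Rightarrow> real) \<Rightarrow> nat \<Rightarrow> 'w \<Rightarrow> (nat \<Rightarrow> 'z) \<Rightarrow> real" where
  "emp_risk l n w s = (1 / real n) * (\<Sum>i<n. l w (s i))"

definition pop_risk :: "'z measure \<Rightarrow> 'w measure \<Rightarrow> nat \<Rightarrow> ((nat \<Rightarrow> 'z) \<Rightarrow> 'w measure)
    \<Rightarrow> ('w \<Rightarrow> 'z \<Rightarrow> real) \<Rightarrow> real" where
  "pop_risk \<mu> Wm n K l = (\<integral>sw. (\<integral>z. l (snd sw) z \<partial>\<mu>) \<partial>joint_SW \<mu> Wm n K)"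

definition train_risk :: "'z measure \<Rightarrow> 'w measure \<Rightarrow> nat \<Rightarrow> ((nat \<Rightarrow> 'z) \<Rightarrow> 'w measure)
    \<Rightarrow> ('w \<Rightarrow> 'z \<Rightarrow> real) \<Rightarrow> real" where
  "train_risk \<mu> Wm n K l = (\<integral>sw. emp_risk l n (snd sw) (fst sw) \<partial>joint_SW \<mu> Wm n K)"

definition gen_err :: "'z measure \<Rightarrow> 'w measure \<Rightarrow> nat \<Rightarrow> ((nat \<Rightarrow> 'z) \<Rightarrow> 'w measure)
    \<Rightarrow> ('w \<Rightarrow> 'z \<Rightarrow> real) \<Rightarrow> real" where
  "gen_err \<mu> Wm n K l = pop_risk \<mu> Wm n K l - train_risk \<mu> Wm n K l"

definition gamma_var :: "'z measure \<Rightarrow> 'w measure \<Rightarrow> nat \<Rightarrow> ((nat \<Rightarrow> 'z) \<Rightarrow> 'w measure)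
    \<Rightarrow> ('w \<Rightarrow> 'z \<Rightarrow> real) \<Rightarrow> real \<Rightarrow> real" where
  "gamma_var \<mu> Wm n K l \<gamma> = (\<integral>sw. (1 / real n) *
      (\<Sum>i<n. (l (snd sw) (fst sw i) - (1 + \<gamma>) * emp_risk l n (snd sw) (fst sw))\<^sup>2)
      \<partial>joint_SW \<mu> Wm n K)"

(* Supersample: Zt i = (Zt_{i,0}, Zt_{i,1}); U i = True encodes U_i = 1, False encodes U_i = 0 *)
definition supersample_space :: "'z measure \<Rightarrow> nat \<Rightarrow> (nat \<Rightarrow> 'z \<times> 'z) measure" where
  "supersample_space \<mu> n = PiM {..<n} (\<lambda>_. \<mu> \<Otimes>\<^sub>M \<mu>)"

definition mask_space :: "nat \<Rightarrow> (nat \<Rightarrow> bool) measure" where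
  "mask_space n = PiM {..<n} (\<lambda>_. measure_pmf (bernoulli_pmf (1/2)))"

definition select_sample :: "nat \<Rightarrow> (nat \<Rightarrow> 'z \<times> 'z) \<Rightarrow> (nat \<Rightarrow> bool) \<Rightarrow> (nat \<Rightarrow> 'z)" where
  "select_sample n zt u = restrict (\<lambda>i. if u i then snd (zt i) else fst (zt i)) {..<n}"

definition joint_ZUW :: "'z measure \<Rightarrow> 'w measure \<Rightarrow> nat \<Rightarrow> ((nat \<Rightarrow> 'z) \<Rightarrow> 'w measure)
    \<Rightarrow> (((nat \<Rightarrow> 'z \<times> 'z) \<times> (nat \<Rightarrow> bool)) \<times> 'w) measure" where
  "joint_ZUW \<mu> Wm n K = (supersample_space \<mu> n \<Otimes>\<^sub>M mask_space n) \<bind>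
      (\<lambda>zu. distr (K (select_sample n (fst zu) (snd zu)))
              ((supersample_space \<mu> n \<Otimes>\<^sub>M mask_space n) \<Otimes>\<^sub>M Wm) (\<lambda>w. (zu, w)))"

end

theory Submission
  imports Defs
begin

text \<open>
  Put c = C1 \<gamma>^2 / (C1 \<gamma>^2 + 2). Averaging over the mask bit U_i, the i-th supersample term
  equals ((1 - c) L_\<mu> - (1 + c) E[l(W, Z_i)]) / 2: if U_i = 1 the point Z~_{i,0} was not used for
  training, so it is a fresh sample independent of W, and if U_i = 0 it is the i-th training point.
  Summing over i and scaling by (2 + C1 \<gamma>^2) / n gives exactly L_\<mu> - (1 + C1 \<gamma>^2) L_n. For a
  {0,1}-valued loss the \<gamma>-variance equals E[L_S - (1 - \<gamma>^2) L_S^2], which is at least \<gamma>^2 L_n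
  because 0 <= L_S <= 1; the claim follows.
\<close>

lemma (in prob_space) abs_integral_le_bound:
  fixes f :: "'a \<Rightarrow> real"
  assumes "\<And>x. x \<in> space M \<Longrightarrow> \<bar>f x\<bar> \<le> B"
  shows "\<bar>\<integral>x. f x \<partial>M\<bar> \<le> B"
proof (cases "integrable M f")
  case True
  have "\<bar>\<integral>x. f x \<partial>M\<bar> \<le> (\<integral>x. \<bar>f x\<bar> \<partial>M)"
    by (rule integral_abs_bound)
  also have "\<dots> \<le> B"
    using True assms by (intro integral_le_const AE_I2) auto
  finally show ?thesis .
next
  case False
  obtain x where "x \<in> space M"
    using not_empty by blast
  with assms[of x] False show ?thesis
    by (simp add: not_integrable_integral_eq)
qed

lemma (in prob_space) integrable_bounded:
  fixes f :: "'a \<Rightarrow> real"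
  assumes "f \<in> borel_measurable M" "\<And>x. x \<in> space M \<Longrightarrow> \<bar>f x\<bar> \<le> B"
  shows "integrable M f"
  using assms by (intro integrable_const_bound[where B=B] AE_I2) auto

lemma (in pair_prob_space) integral_pair_integrate_fst:
  fixes f :: "'a \<Rightarrow> 'b \<Rightarrow> real"
  assumes [measurable]: "(\<lambda>(a, b). f a b) \<in> borel_measurable (M1 \<Otimes>\<^sub>M M2)"
    and bounded: "\<And>a b. a \<in> space M1 \<Longrightarrow> b \<in> space M2 \<Longrightarrow> \<bar>f a b\<bar> \<le> B"
  shows "(\<integral>(a, b). f a b \<partial>(M1 \<Otimes>\<^sub>M M2)) = (\<integral>(a, b). (\<integral>a'. f a' b \<partial>M1) \<partial>(M1 \<Otimes>\<^sub>M M2))"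
proof -
  have "integrable (M1 \<Otimes>\<^sub>M M2) (\<lambda>(a, b). f a b)"
    using bounded by (intro P.integrable_bounded) (auto simp: space_pair_measure)
  moreover have "integrable (M1 \<Otimes>\<^sub>M M2) (\<lambda>(a, b). \<integral>a'. f a' b \<partial>M1)"
    using bounded by (intro P.integrable_bounded[where B=B])
      (auto simp: space_pair_measure intro!: M1.abs_integral_le_bound)
  ultimately show ?thesis
    by (simp add: integral_snd[symmetric] M1.prob_space)
qed

lemma integral_measurable_subprob_algebra2[measurable]:
  fixes f :: "'a \<Rightarrow> 'b \<Rightarrow> real"
  assumes f[measurable]: "(\<lambda>(x, y). f x y) \<in> borel_measurable (M \<Otimes>\<^sub>M N)"
    and L[measurable]: "L \<in> M \<rightarrow>\<^sub>M subprob_algebra N"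
  shows "(\<lambda>x. \<integral>y. f x y \<partial>L x) \<in> borel_measurable M"
proof -
  note integral_measurable_subprob_algebra[measurable] measurable_distr2[measurable]
  have "(\<lambda>x. \<integral>p. (\<lambda>(x, y). f x y) p \<partial>distr (L x) (M \<Otimes>\<^sub>M N) (Pair x)) \<in> borel_measurable M"
    by measurable
  then show ?thesis
    by (rule measurable_cong[THEN iffD1, rotated])
       (simp add: integral_distr measurable_Pair1' sets_kernel[OF L] cong: measurable_cong_sets)
qed

lemma
  fixes f :: "'a \<times> 'b \<Rightarrow> real"
  assumes M: "finite_measure M" and K[measurable]: "K \<in> M \<rightarrow>\<^sub>M subprob_algebra N"
    and f[measurable]: "f \<in> borel_measurable (M \<Otimes>\<^sub>M N)"
    and bounded: "\<And>p. p \<in> space (M \<Otimes>\<^sub>M N) \<Longrightarrow> \<bar>f p\<bar> \<le> B"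
  shows integrable_bind_Pair_kernel: "integrable (M \<bind> (\<lambda>x. distr (K x) (M \<Otimes>\<^sub>M N) (Pair x))) f"
    and integral_bind_Pair_kernel:
      "(\<integral>p. f p \<partial>(M \<bind> (\<lambda>x. distr (K x) (M \<Otimes>\<^sub>M N) (Pair x)))) = (\<integral>x. \<integral>y. f (x, y) \<partial>K x \<partial>M)"
proof -
  note measurable_distr2[measurable]
  let ?L = "\<lambda>x. distr (K x) (M \<Otimes>\<^sub>M N) (Pair x)"
  have kernel: "?L \<in> M \<rightarrow>\<^sub>M subprob_algebra (M \<Otimes>\<^sub>M N)"
    by measurable
  have sub: "AE x in M. emeasure (?L x) (space (?L x)) \<le> ennreal 1"
    using subprob_space.emeasure_space_le_1[OF subprob_space_kernel[OF kernel]] by (intro AE_I2) simp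
  show "integrable (M \<bind> ?L) f"
    by (rule integrable_bind[OF f bounded kernel M sub])
  have "(\<integral>p. f p \<partial>(M \<bind> ?L)) = (\<integral>x. \<integral>p. f p \<partial>?L x \<partial>M)"
    by (rule integral_bind[OF f bounded kernel M sub])
  also have "\<dots> = (\<integral>x. \<integral>y. f (x, y) \<partial>K x \<partial>M)"
    by (intro Bochner_Integration.integral_cong refl integral_distr f)
       (simp add: measurable_Pair1' sets_kernel[OF K] cong: measurable_cong_sets)
  finally show "(\<integral>p. f p \<partial>(M \<bind> ?L)) = (\<integral>x. \<integral>y. f (x, y) \<partial>K x \<partial>M)" .
qed

lemma gamma_variance_01_eq:
  fixes x :: "nat \<Rightarrow> real" and g :: real
  assumes "n > 0" and x01: "\<And>i. i < n \<Longrightarrow> x i \<in> {0, 1}"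
  defines "L \<equiv> (1 / real n) * (\<Sum>i<n. x i)"
  shows "(1 / real n) * (\<Sum>i<n. (x i - (1 + g) * L)\<^sup>2) = L - (1 - g\<^sup>2) * L\<^sup>2"
proof -
  define c where "c = (1 + g) * L"
  have "(\<Sum>i<n. (x i - c)\<^sup>2) = (\<Sum>i<n. x i - 2 * c * x i + c\<^sup>2)"
    using x01 by (intro sum.cong) (auto simp: power2_eq_square algebra_simps)
  also have "\<dots> = (1 - 2 * c) * (\<Sum>i<n. x i) + real n * c\<^sup>2"
    by (simp add: sum.distrib sum_subtractf sum_distrib_left algebra_simps)
  also have "(\<Sum>i<n. x i) = real n * L"
    using \<open>n > 0\<close> unfolding L_def by simp
  finally show ?thesis
    using \<open>n > 0\<close> unfolding c_def by (simp add: power2_eq_square field_simps)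
qed

locale supersample =
  fixes \<mu> :: "'z measure" and n :: nat
  assumes prob_space: "prob_space \<mu>"
begin

sublocale \<mu>: prob_space \<mu>
  by (rule prob_space)

sublocale sample: prob_space "sample_space \<mu> n"
  unfolding sample_space_def by (intro prob_space_PiM prob_space)

sublocale super: prob_space "supersample_space \<mu> n"
  unfolding supersample_space_def by (intro prob_space_PiM prob_space_pair prob_space)

sublocale mask: prob_space "mask_space n"
  unfolding mask_space_def by (intro prob_space_PiM prob_space_measure_pmf)

lemma measurable_sample_component[measurable]: "i < n \<Longrightarrow> (\<lambda>s. s i) \<in> sample_space \<mu> n \<rightarrow>\<^sub>M \<mu>"
  unfolding sample_space_def by measurable

lemma measurable_supersample_component[measurable]:
  "i < n \<Longrightarrow> (\<lambda>zt. zt i) \<in> supersample_space \<mu> n \<rightarrow>\<^sub>M \<mu> \<Otimes>\<^sub>M \<mu>"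
  unfolding supersample_space_def by measurable

lemma measurable_mask_component[measurable]: "i < n \<Longrightarrow> (\<lambda>u. u i) \<in> mask_space n \<rightarrow>\<^sub>M count_space UNIV"
  unfolding mask_space_def
  by (subst measurable_cong_sets[OF refl sets_measure_pmf_count_space[symmetric]])
     (rule measurable_component_singleton, simp)

lemma measurable_select_sample[measurable]:
  "(\<lambda>zu. select_sample n (fst zu) (snd zu)) \<in> supersample_space \<mu> n \<Otimes>\<^sub>M mask_space n \<rightarrow>\<^sub>M sample_space \<mu> n"
  unfolding select_sample_def sample_space_def
proof (rule measurable_restrict)
  fix i :: nat assume "i \<in> {..<n}"
  then have [simp]: "i < n" by simp
  show "(\<lambda>zu. if snd zu i then snd (fst zu i) else fst (fst zu i))
      \<in> supersample_space \<mu> n \<Otimes>\<^sub>M mask_space n \<rightarrow>\<^sub>M \<mu>"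
    by measurable
qed

lemma measurable_select_sample_const[measurable]:
  "(\<lambda>zt. select_sample n zt u) \<in> supersample_space \<mu> n \<rightarrow>\<^sub>M sample_space \<mu> n"
  unfolding select_sample_def sample_space_def
  by (rule measurable_restrict) (simp add: measurable_supersample_component)

lemma space_sample_space: "s \<in> space (sample_space \<mu> n) \<Longrightarrow> i < n \<Longrightarrow> s i \<in> space \<mu>"
  unfolding sample_space_def by (auto simp: space_PiM)

lemma fst_supersample_space: "zt \<in> space (supersample_space \<mu> n) \<Longrightarrow> i < n \<Longrightarrow> fst (zt i) \<in> space \<mu>"
  using measurable_space[OF measurable_supersample_component] by (fastforce simp: space_pair_measure)

lemma distr_select_sample:
  "distr (supersample_space \<mu> n) (sample_space \<mu> n) (\<lambda>zt. select_sample n zt u) = sample_space \<mu> n"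
  unfolding sample_space_def
proof (rule product_sigma_finite.PiM_eqI)
  interpret pairs: product_prob_space "\<lambda>_. \<mu> \<Otimes>\<^sub>M \<mu>"
    by (intro product_prob_spaceI prob_space_pair prob_space)
  show "product_sigma_finite (\<lambda>_. \<mu>)" by unfold_locales
  fix A assume A: "\<And>i. i \<in> {..<n} \<Longrightarrow> A i \<in> sets \<mu>"
  define B where "B i = (if u i then space \<mu> \<times> A i else A i \<times> space \<mu>)" for i
  have B: "B i \<in> sets (\<mu> \<Otimes>\<^sub>M \<mu>)" if "i \<in> {..<n}" for i
    using A[OF that] by (simp add: B_def)
  have "(\<lambda>zt. select_sample n zt u) -` Pi\<^sub>E {..<n} A \<inter> space (supersample_space \<mu> n) = Pi\<^sub>E {..<n} B"
    using A[THEN sets.sets_into_space]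
    by (auto simp: select_sample_def supersample_space_def space_PiM space_pair_measure B_def PiE_iff
        mem_Times_iff split: if_splits) blast+
  then have "emeasure (distr (supersample_space \<mu> n) (Pi\<^sub>M {..<n} (\<lambda>_. \<mu>)) (\<lambda>zt. select_sample n zt u))
      (Pi\<^sub>E {..<n} A) = emeasure (supersample_space \<mu> n) (Pi\<^sub>E {..<n} B)"
    using A measurable_select_sample_const[unfolded sample_space_def]
    by (simp add: emeasure_distr sets_PiM_I_finite)
  also have "\<dots> = (\<Prod>i<n. emeasure (\<mu> \<Otimes>\<^sub>M \<mu>) (B i))"
    unfolding supersample_space_def using B by (intro pairs.emeasure_PiM) auto
  also have "\<dots> = (\<Prod>i<n. emeasure \<mu> (A i))"
    using A by (intro prod.cong) (simp_all add: B_def \<mu>.emeasure_pair_measure_Times \<mu>.emeasure_space_1)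
  finally show "emeasure (distr (supersample_space \<mu> n) (Pi\<^sub>M {..<n} (\<lambda>_. \<mu>)) (\<lambda>zt. select_sample n zt u))
      (Pi\<^sub>E {..<n} A) = (\<Prod>i\<in>{..<n}. emeasure \<mu> (A i))"
    by simp
next
  show "sets (distr (supersample_space \<mu> n) (Pi\<^sub>M {..<n} (\<lambda>_. \<mu>)) (\<lambda>zt. select_sample n zt u))
      = sets (Pi\<^sub>M {..<n} (\<lambda>_. \<mu>))"
    by simp
qed simp

lemma integral_select_sample:
  fixes F :: "(nat \<Rightarrow> 'z) \<Rightarrow> real"
  assumes "F \<in> borel_measurable (sample_space \<mu> n)"
  shows "(\<integral>zt. F (select_sample n zt u) \<partial>supersample_space \<mu> n) = (\<integral>s. F s \<partial>sample_space \<mu> n)"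
  using integral_distr[OF measurable_select_sample_const[of u] assms] by (simp add: distr_select_sample)

text \<open>
  When \<open>u i\<close> holds, the selected sample reads only \<open>snd (zt i)\<close>, so the unused point
  \<open>fst (zt i)\<close> behaves as a fresh sample independent of it.
\<close>

lemma integral_select_sample_unused:
  fixes F :: "(nat \<Rightarrow> 'z) \<Rightarrow> 'z \<Rightarrow> real"
  assumes i: "i < n" "u i"
    and [measurable]: "(\<lambda>(s, z). F s z) \<in> borel_measurable (sample_space \<mu> n \<Otimes>\<^sub>M \<mu>)"
    and bounded: "\<And>s z. s \<in> space (sample_space \<mu> n) \<Longrightarrow> z \<in> space \<mu> \<Longrightarrow> \<bar>F s z\<bar> \<le> B"
  shows "(\<integral>zt. F (select_sample n zt u) (fst (zt i)) \<partial>supersample_space \<mu> n)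
    = (\<integral>s. \<integral>z. F s z \<partial>\<mu> \<partial>sample_space \<mu> n)"
proof -
  interpret pairs: product_prob_space "\<lambda>_. \<mu> \<Otimes>\<^sub>M \<mu>"
    by (intro product_prob_spaceI prob_space_pair prob_space)
  interpret \<mu>\<mu>: pair_prob_space \<mu> \<mu> ..
  define J where "J = {..<n} - {i}"
  have Z: "supersample_space \<mu> n = PiM (insert i J) (\<lambda>_. \<mu> \<Otimes>\<^sub>M \<mu>)" and J: "finite J" "i \<notin> J"
    using i by (auto simp: J_def supersample_space_def insert_absorb)
  have sel_space: "select_sample n zt u \<in> space (sample_space \<mu> n)"
    if "zt \<in> space (supersample_space \<mu> n)" for zt
    using measurable_space[OF measurable_select_sample_const that] .
  have sel_upd: "select_sample n (x(i := (a, snd y))) u = select_sample n (x(i := y)) u" for x a y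
    using i by (auto simp: select_sample_def fun_eq_iff)
  have "integrable (supersample_space \<mu> n) (\<lambda>zt. F (select_sample n zt u) (fst (zt i)))"
    using i bounded sel_space fst_supersample_space by (intro super.integrable_bounded[where B=B]) simp_all
  moreover have "integrable (supersample_space \<mu> n) (\<lambda>zt. \<integral>z. F (select_sample n zt u) z \<partial>\<mu>)"
    using bounded sel_space by (intro super.integrable_bounded[where B=B] \<mu>.abs_integral_le_bound) simp_all
  moreover have "(\<integral>y. F (select_sample n (x(i := y)) u) (fst y) \<partial>(\<mu> \<Otimes>\<^sub>M \<mu>))
      = (\<integral>y. \<integral>z. F (select_sample n (x(i := y)) u) z \<partial>\<mu> \<partial>(\<mu> \<Otimes>\<^sub>M \<mu>))"
    if x: "x \<in> space (PiM J (\<lambda>_. \<mu> \<Otimes>\<^sub>M \<mu>))" for x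
  proof -
    have [measurable]: "(\<lambda>y. x(i := y)) \<in> \<mu> \<Otimes>\<^sub>M \<mu> \<rightarrow>\<^sub>M supersample_space \<mu> n"
      unfolding Z by (rule measurable_component_update[OF x J(2)])
    have "(\<integral>(a, b). F (select_sample n (x(i := (a, b))) u) a \<partial>(\<mu> \<Otimes>\<^sub>M \<mu>))
      = (\<integral>(a, b). \<integral>a'. F (select_sample n (x(i := (a', b))) u) a' \<partial>\<mu> \<partial>(\<mu> \<Otimes>\<^sub>M \<mu>))"
      using bounded sel_space measurable_space[OF measurable_component_update[OF x J(2)]]
      by (intro \<mu>\<mu>.integral_pair_integrate_fst[where B=B]) (simp_all add: Z space_pair_measure)
    then show ?thesis
      by (simp add: case_prod_beta' sel_upd)
  qed
  ultimately have "(\<integral>zt. F (select_sample n zt u) (fst (zt i)) \<partial>supersample_space \<mu> n)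
      = (\<integral>zt. \<integral>z. F (select_sample n zt u) z \<partial>\<mu> \<partial>supersample_space \<mu> n)"
    by (simp add: Z pairs.product_integral_insert[OF J] cong: Bochner_Integration.integral_cong)
  also have "\<dots> = (\<integral>s. \<integral>z. F s z \<partial>\<mu> \<partial>sample_space \<mu> n)"
    by (rule integral_select_sample) measurable
  finally show ?thesis .
qed

lemma integral_mask_component:
  fixes h :: "bool \<Rightarrow> real"
  assumes "i < n"
  shows "(\<integral>u. h (u i) \<partial>mask_space n) = (h True + h False) / 2"
proof -
  let ?coin = "measure_pmf (bernoulli_pmf (1/2))"
  have "(\<integral>u. h (u i) \<partial>mask_space n) = (\<integral>b. h b \<partial>distr (mask_space n) ?coin (\<lambda>u. u i))"
    using assms unfolding mask_space_def
    by (intro integral_distr[symmetric] measurable_component_singleton) simp_all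
  also have "\<dots> = (\<integral>b. h b \<partial>?coin)"
    using assms unfolding mask_space_def
    by (subst distr_PiM_component[where M="\<lambda>_. ?coin"]) (simp_all add: prob_space_measure_pmf)
  also have "\<dots> = (h True + h False) / 2"
    by (simp add: integral_measure_pmf_real[where A=UNIV] UNIV_bool)
  finally show ?thesis .
qed

end

locale learning_setting = supersample \<mu> n
  for \<mu> :: "'z measure" and n :: nat +
  fixes Wm :: "'w measure" and K :: "(nat \<Rightarrow> 'z) \<Rightarrow> 'w measure" and l :: "'w \<Rightarrow> 'z \<Rightarrow> real"
  assumes n_pos: "n > 0"
    and K: "K \<in> sample_space \<mu> n \<rightarrow>\<^sub>M prob_algebra Wm"
    and l_measurable[measurable]: "(\<lambda>(w, z). l w z) \<in> borel_measurable (Wm \<Otimes>\<^sub>M \<mu>)"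
    and l_01: "\<And>w z. w \<in> space Wm \<Longrightarrow> z \<in> space \<mu> \<Longrightarrow> l w z \<in> {0, 1}"
begin

lemma K_subprob[measurable]: "K \<in> sample_space \<mu> n \<rightarrow>\<^sub>M subprob_algebra Wm"
  using K by (rule measurable_prob_algebraD)

lemma prob_space_K: "s \<in> space (sample_space \<mu> n) \<Longrightarrow> prob_space (K s)"
  using measurable_space[OF K] by (simp add: space_prob_algebra)

lemma space_K: "s \<in> space (sample_space \<mu> n) \<Longrightarrow> space (K s) = space Wm"
  using K_subprob by (rule subprob_measurableD(1))

lemma abs_l_le_1: "w \<in> space Wm \<Longrightarrow> z \<in> space \<mu> \<Longrightarrow> \<bar>l w z\<bar> \<le> 1"
  using l_01 by fastforce

lemma abs_integral_K_l_le_1: "s \<in> space (sample_space \<mu> n) \<Longrightarrow> z \<in> space \<mu> \<Longrightarrow> \<bar>\<integral>w. l w z \<partial>K s\<bar> \<le> 1"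
  by (intro prob_space.abs_integral_le_bound[OF prob_space_K]) (simp_all add: space_K abs_l_le_1)

lemma emp_risk_bounds:
  assumes "s \<in> space (sample_space \<mu> n)" "w \<in> space Wm"
  shows "0 \<le> emp_risk l n w s" "emp_risk l n w s \<le> 1"
proof -
  have "0 \<le> (\<Sum>i<n. l w (s i))" "(\<Sum>i<n. l w (s i)) \<le> (\<Sum>i<n. 1)"
    using l_01[OF assms(2) space_sample_space[OF assms(1)]] by (intro sum_nonneg sum_mono; force)+
  then show "0 \<le> emp_risk l n w s" "emp_risk l n w s \<le> 1"
    using n_pos unfolding emp_risk_def by (simp_all add: field_simps)
qed

lemma space_joint_SW: "space (joint_SW \<mu> Wm n K) = space (sample_space \<mu> n \<Otimes>\<^sub>M Wm)"
  using sample.not_empty prob_space_K unfolding joint_SW_def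
  by (intro sets_eq_imp_space_eq sets_bind) auto

lemma
  fixes f :: "(nat \<Rightarrow> 'z) \<times> 'w \<Rightarrow> real"
  assumes "f \<in> borel_measurable (sample_space \<mu> n \<Otimes>\<^sub>M Wm)"
    and "\<And>p. p \<in> space (sample_space \<mu> n \<Otimes>\<^sub>M Wm) \<Longrightarrow> \<bar>f p\<bar> \<le> B"
  shows integrable_joint_SW: "integrable (joint_SW \<mu> Wm n K) f"
    and integral_joint_SW:
      "(\<integral>p. f p \<partial>joint_SW \<mu> Wm n K) = (\<integral>s. \<integral>w. f (s, w) \<partial>K s \<partial>sample_space \<mu> n)"
  unfolding joint_SW_def
  using integrable_bind_Pair_kernel[OF sample.finite_measure_axioms K_subprob assms]
    integral_bind_Pair_kernel[OF sample.finite_measure_axioms K_subprob assms]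
  by simp_all

lemma pop_risk_eq: "pop_risk \<mu> Wm n K l = (\<integral>s. \<integral>w. \<integral>z. l w z \<partial>\<mu> \<partial>K s \<partial>sample_space \<mu> n)"
  unfolding pop_risk_def
  by (subst integral_joint_SW[where B=1])
     (auto simp: space_pair_measure abs_l_le_1 intro!: \<mu>.abs_integral_le_bound)

lemma train_risk_eq:
  "train_risk \<mu> Wm n K l = (1 / real n) * (\<Sum>i<n. \<integral>sw. l (snd sw) (fst sw i) \<partial>joint_SW \<mu> Wm n K)"
proof -
  have "integrable (joint_SW \<mu> Wm n K) (\<lambda>sw. l (snd sw) (fst sw i))" if "i < n" for i
    using that by (intro integrable_joint_SW[where B=1])
      (measurable, auto simp: space_pair_measure space_sample_space abs_l_le_1)
  then show ?thesis
    unfolding train_risk_def emp_risk_def by (simp add: Bochner_Integration.integral_sum)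
qed

lemma integral_K_integral_swap:
  assumes s: "s \<in> space (sample_space \<mu> n)"
  shows "(\<integral>z. \<integral>w. l w z \<partial>K s \<partial>\<mu>) = (\<integral>w. \<integral>z. l w z \<partial>\<mu> \<partial>K s)"
proof -
  interpret K: prob_space "K s"
    by (rule prob_space_K[OF s])
  interpret \<mu>K: pair_prob_space \<mu> "K s" ..
  have "(\<lambda>(z, w). l w z) \<in> borel_measurable (\<mu> \<Otimes>\<^sub>M K s)"
    using sets_kernel[OF K_subprob s] by (simp cong: measurable_cong_sets)
  then have "integrable (\<mu> \<Otimes>\<^sub>M K s) (\<lambda>(z, w). l w z)"
    by (rule \<mu>K.P.integrable_bounded[where B=1]) (auto simp: space_pair_measure space_K[OF s] abs_l_le_1)
  then show ?thesis
    by (rule \<mu>K.Fubini_integral[symmetric])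
qed

lemma integral_supersample_loss:
  assumes i: "i < n"
  shows "(\<integral>zt. \<integral>w. l w (fst (zt i)) \<partial>K (select_sample n zt u) \<partial>supersample_space \<mu> n)
    = (if u i then pop_risk \<mu> Wm n K l else \<integral>sw. l (snd sw) (fst sw i) \<partial>joint_SW \<mu> Wm n K)"
proof (cases "u i")
  case True
  have "(\<integral>zt. \<integral>w. l w (fst (zt i)) \<partial>K (select_sample n zt u) \<partial>supersample_space \<mu> n)
      = (\<integral>s. \<integral>z. \<integral>w. l w z \<partial>K s \<partial>\<mu> \<partial>sample_space \<mu> n)"
    by (rule integral_select_sample_unused[where i=i and u=u, OF i True])
       (measurable, auto intro: abs_integral_K_l_le_1)
  also have "\<dots> = pop_risk \<mu> Wm n K l"
    unfolding pop_risk_eq by (intro Bochner_Integration.integral_cong refl integral_K_integral_swap)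
  finally show ?thesis
    using True by simp
next
  case False
  then have "(\<integral>zt. \<integral>w. l w (fst (zt i)) \<partial>K (select_sample n zt u) \<partial>supersample_space \<mu> n)
      = (\<integral>zt. (\<lambda>s. \<integral>w. l w (s i) \<partial>K s) (select_sample n zt u) \<partial>supersample_space \<mu> n)"
    using i by (simp add: select_sample_def)
  also have "\<dots> = (\<integral>s. \<integral>w. l w (s i) \<partial>K s \<partial>sample_space \<mu> n)"
    using i by (intro integral_select_sample) measurable
  also have "\<dots> = (\<integral>sw. l (snd sw) (fst sw i) \<partial>joint_SW \<mu> Wm n K)"
    using i by (subst integral_joint_SW[where B=1]) (auto simp: space_pair_measure abs_l_le_1 space_sample_space)
  finally show ?thesis
    using False by simp
qed

lemma integral_mask_weighted_loss:
  fixes g :: "bool \<Rightarrow> real"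
  assumes i[simp]: "i < n"
  shows "(\<integral>zuw. g (snd (fst zuw) i) * l (snd zuw) (fst (fst (fst zuw) i)) \<partial>joint_ZUW \<mu> Wm n K)
    = (g True * pop_risk \<mu> Wm n K l + g False * (\<integral>sw. l (snd sw) (fst sw i) \<partial>joint_SW \<mu> Wm n K)) / 2"
proof -
  interpret ZU: pair_prob_space "supersample_space \<mu> n" "mask_space n" ..
  let ?ZU = "supersample_space \<mu> n \<Otimes>\<^sub>M mask_space n"
  let ?G = "\<bar>g True\<bar> + \<bar>g False\<bar>"
  define R where "R zu = (\<integral>w. l w (fst (fst zu i)) \<partial>K (select_sample n (fst zu) (snd zu)))" for zu
  have g_le: "\<bar>g b * x\<bar> \<le> ?G" if "\<bar>x\<bar> \<le> 1" for b x
  proof -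
    have "\<bar>g b\<bar> * \<bar>x\<bar> \<le> \<bar>g b\<bar>"
      using that by (intro mult_left_le) simp_all
    then show ?thesis
      by (cases b) (simp_all add: abs_mult)
  qed
  have R_le: "\<bar>R zu\<bar> \<le> 1" if "zu \<in> space ?ZU" for zu
    using that measurable_space[OF measurable_select_sample] unfolding R_def
    by (intro abs_integral_K_l_le_1 fst_supersample_space i) (auto simp: space_pair_measure)
  have [measurable]: "R \<in> borel_measurable ?ZU"
    unfolding R_def[abs_def] by measurable
  have "(\<integral>zuw. g (snd (fst zuw) i) * l (snd zuw) (fst (fst (fst zuw) i)) \<partial>joint_ZUW \<mu> Wm n K)
      = (\<integral>zu. \<integral>w. g (snd zu i) * l w (fst (fst zu i)) \<partial>K (select_sample n (fst zu) (snd zu)) \<partial>?ZU)"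
    unfolding joint_ZUW_def
    by (subst integral_bind_Pair_kernel[where B="?G"])
       (measurable, auto simp: space_pair_measure intro!: g_le abs_l_le_1 fst_supersample_space
         intro: ZU.P.finite_measure_axioms)
  also have "\<dots> = (\<integral>zu. g (snd zu i) * R zu \<partial>?ZU)"
    unfolding R_def by simp
  also have "\<dots> = (\<integral>u. \<integral>zt. g (u i) * R (zt, u) \<partial>supersample_space \<mu> n \<partial>mask_space n)"
    using g_le R_le
    by (subst ZU.integral_snd) (auto intro!: ZU.P.integrable_bounded[where B="?G"] simp: case_prod_beta')
  also have "\<dots> = (\<integral>u. g (u i) * (if u i then pop_risk \<mu> Wm n K l
      else \<integral>sw. l (snd sw) (fst sw i) \<partial>joint_SW \<mu> Wm n K) \<partial>mask_space n)"
    by (simp add: R_def integral_supersample_loss)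
  also have "\<dots> = (g True * pop_risk \<mu> Wm n K l + g False * (\<integral>sw. l (snd sw) (fst sw i) \<partial>joint_SW \<mu> Wm n K)) / 2"
    by (simp add: integral_mask_component[OF i, of "\<lambda>b. g b * (if b then pop_risk \<mu> Wm n K l
      else \<integral>sw. l (snd sw) (fst sw i) \<partial>joint_SW \<mu> Wm n K)"])
  finally show ?thesis .
qed

lemma gamma_var_ge_train_risk:
  assumes "\<gamma>\<^sup>2 \<le> 1"
  shows "\<gamma>\<^sup>2 * train_risk \<mu> Wm n K l \<le> gamma_var \<mu> Wm n K l \<gamma>"
proof -
  let ?L = "\<lambda>sw. emp_risk l n (snd sw) (fst sw)"
  have [measurable]: "?L \<in> borel_measurable (sample_space \<mu> n \<Otimes>\<^sub>M Wm)"
    unfolding emp_risk_def by measurable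
  have L01: "0 \<le> ?L sw" "?L sw \<le> 1" if "sw \<in> space (joint_SW \<mu> Wm n K)" for sw
    using that emp_risk_bounds by (auto simp: space_joint_SW space_pair_measure)
  have "gamma_var \<mu> Wm n K l \<gamma> = (\<integral>sw. ?L sw - (1 - \<gamma>\<^sup>2) * (?L sw)\<^sup>2 \<partial>joint_SW \<mu> Wm n K)"
    unfolding gamma_var_def emp_risk_def
    by (intro Bochner_Integration.integral_cong refl gamma_variance_01_eq n_pos l_01)
       (auto simp: space_joint_SW space_pair_measure space_sample_space)
  moreover have "(\<integral>sw. \<gamma>\<^sup>2 * ?L sw \<partial>joint_SW \<mu> Wm n K)
      \<le> (\<integral>sw. ?L sw - (1 - \<gamma>\<^sup>2) * (?L sw)\<^sup>2 \<partial>joint_SW \<mu> Wm n K)"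
  proof (rule integral_mono)
    show "integrable (joint_SW \<mu> Wm n K) (\<lambda>sw. \<gamma>\<^sup>2 * ?L sw)"
      using L01 by (intro integrable_joint_SW[where B="\<gamma>\<^sup>2"])
        (measurable, auto simp: space_joint_SW abs_mult mult_left_le)
    show "integrable (joint_SW \<mu> Wm n K) (\<lambda>sw. ?L sw - (1 - \<gamma>\<^sup>2) * (?L sw)\<^sup>2)"
      using L01 by (intro Bochner_Integration.integrable_diff integrable_mult_right integrable_joint_SW[where B=1])
        (measurable, auto simp: space_joint_SW abs_le_iff power_le_one)
    show "\<gamma>\<^sup>2 * ?L sw \<le> ?L sw - (1 - \<gamma>\<^sup>2) * (?L sw)\<^sup>2" if "sw \<in> space (joint_SW \<mu> Wm n K)" for sw
      using L01[OF that] assms mult_left_mono[of "(?L sw)\<^sup>2" "?L sw" "1 - \<gamma>\<^sup>2"]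
      by (simp add: power2_eq_square mult_left_le algebra_simps)
  qed
  ultimately show ?thesis
    unfolding train_risk_def by simp
qed

lemma weighted_supersample_sum_eq:
  assumes "0 \<le> a"
  shows "(2 + a) / real n *
      (\<Sum>i<n. \<integral>zuw. ((if snd (fst zuw) i then 1 else -1) - a / (a + 2))
         * l (snd zuw) (fst (fst (fst zuw) i)) \<partial>joint_ZUW \<mu> Wm n K)
    = pop_risk \<mu> Wm n K l - (1 + a) * train_risk \<mu> Wm n K l"
proof -
  define c where "c = a / (a + 2)"
  define P where "P = pop_risk \<mu> Wm n K l"
  define T where "T = train_risk \<mu> Wm n K l"
  define E where "E i = (\<integral>sw. l (snd sw) (fst sw i) \<partial>joint_SW \<mu> Wm n K)" for i
  have c: "(2 + a) * (1 - c) = 2" "(2 + a) * (1 + c) = 2 + 2 * a"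
    using assms unfolding c_def by (simp_all add: field_simps)
  have "(\<Sum>i<n. \<integral>zuw. ((if snd (fst zuw) i then 1 else -1) - c)
         * l (snd zuw) (fst (fst (fst zuw) i)) \<partial>joint_ZUW \<mu> Wm n K)
      = (\<Sum>i<n. ((1 - c) * P + (- 1 - c) * E i) / 2)"
    unfolding P_def E_def
    by (intro sum.cong refl) (simp add: integral_mask_weighted_loss[where g="\<lambda>b. (if b then 1 else -1) - c"])
  also have "\<dots> = (real n * ((1 - c) * P) + (- 1 - c) * (\<Sum>i<n. E i)) / 2"
    by (simp add: sum_divide_distrib[symmetric] sum.distrib sum_distrib_left)
  also have "(\<Sum>i<n. E i) = real n * T"
    using n_pos unfolding T_def E_def train_risk_eq by simp
  finally have "(2 + a) / real n *
      (\<Sum>i<n. \<integral>zuw. ((if snd (fst zuw) i then 1 else -1) - c)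
         * l (snd zuw) (fst (fst (fst zuw) i)) \<partial>joint_ZUW \<mu> Wm n K)
      = (2 + a) / real n * ((real n * ((1 - c) * P) + (- 1 - c) * (real n * T)) / 2)"
    by (simp only:)
  also have "\<dots> = ((2 + a) * (1 - c) * P - (2 + a) * (1 + c) * T) / 2"
    using n_pos by (simp add: field_simps)
  also have "\<dots> = P - (1 + a) * T"
    unfolding c by (simp add: field_simps)
  finally show ?thesis
    unfolding c_def P_def T_def .
qed

end

theorem lemma4:
  fixes \<mu> :: "'z measure" and Wm :: "'w measure" and n :: nat
    and K :: "(nat \<Rightarrow> 'z) \<Rightarrow> 'w measure" and l :: "'w \<Rightarrow> 'z \<Rightarrow> real"
    and \<gamma> C1 :: real
  assumes "prob_space \<mu>"
    and "n > 0"
    and "K \<in> sample_space \<mu> n \<rightarrow>\<^sub>M prob_algebra Wm"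
    and "(\<lambda>(w, z). l w z) \<in> borel_measurable (Wm \<Otimes>\<^sub>M \<mu>)"
    and "\<And>w z. w \<in> space Wm \<Longrightarrow> z \<in> space \<mu> \<Longrightarrow> l w z \<in> {0, 1}"
    and "0 < \<gamma>" and "\<gamma> < 1"
    and "C1 > 0"
  shows "gen_err \<mu> Wm n K l - C1 * gamma_var \<mu> Wm n K l \<gamma>
    \<le> (2 + C1 * \<gamma>\<^sup>2) / real n *
       (\<Sum>i<n. \<integral>zuw. ((if snd (fst zuw) i then 1 else -1) - C1 * \<gamma>\<^sup>2 / (C1 * \<gamma>\<^sup>2 + 2))
                      * l (snd zuw) (fst (fst (fst zuw) i)) \<partial>joint_ZUW \<mu> Wm n K)"
proof -
  interpret learning_setting \<mu> n Wm K l
    using assms(1-5) by (simp add: learning_setting_def learning_setting_axioms_def supersample_def)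
  have "\<gamma>\<^sup>2 \<le> 1"
    using assms(6,7) by (simp add: power_le_one)
  then have "C1 * (\<gamma>\<^sup>2 * train_risk \<mu> Wm n K l) \<le> C1 * gamma_var \<mu> Wm n K l \<gamma>"
    using assms(8) by (intro mult_left_mono gamma_var_ge_train_risk) simp_all
  moreover have "0 \<le> C1 * \<gamma>\<^sup>2"
    using assms(8) by simp
  ultimately show ?thesis
    unfolding gen_err_def weighted_supersample_sum_eq[OF \<open>0 \<le> C1 * \<gamma>\<^sup>2\<close>] by (simp add: algebra_simps)
qed

end
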